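(* The following statements are equivalent: (a) $\hat\beta_{AL}$ is pointwise consistent for $\beta$, i.e. for every $\beta\in\mathbb{R}^p$ and every $\epsilon>0$, $P_\beta(\|\hat\beta_{AL}-\beta\|>\epsilon)\to0$; (b) $\hat\beta_{AL}$ is uniformly consistent for $\beta$, i.e. for every $\epsilon>0$, $\sup_{\beta\in\mathbb{R}^p}P_\beta(\|\hat\beta_{AL}-\beta\|>\epsilon)\to0$; (c) $\lambda^*/n\to0$ as $n\to\infty$; (d) for every $\beta\in\mathbb{R}^p$ and every $j\in\mathcal{A}(\beta)$, $P_\beta(\hat\beta_{AL,j}=0)\to0$ as $n\to\infty$.
   Context: For each $n\ge p$: linear regression model $y=X\beta+\varepsilon$ with $y\in\mathbb{R}^n$, non-stochastic $X\in\mathbb{R}^{n\times p}$ ($p$ fixed) of full column rank, unknown $\beta\in\mathbb{R}^p$, and $\varepsilon$ with i.i.d. components of mean zero and finite variance $\sigma^2>0$; $P_\beta$ is the probability when the true parameter is $\beta$. $X'X/n\to C$ positive definite as $n\to\infty$. $\hat\beta_{LS}=(X'X)^{-1}X'y$; the events $\{\hat\beta_{LS,j}=0\}$ have probability zero and are excluded. Non-negative tuning parameters $\lambda_j=\lambda_{n,j}$, $\lambda^*=\max_j\lambda_j$. Adaptive Lasso: $\hat\beta_{AL}=\arg\min_{b\in\mathbb{R}^p}\big(\|y-Xb\|^2+2\sum_{j=1}^p\lambda_j|b_j|/|\hat\beta_{LS,j}|\big)$. The active set is $\mathcal{A}=\mathcal{A}(\beta)=\{j:\beta_j\neq0\}$.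 *)

theory Defs
  imports "HOL-Probability.Probability"
begin

text \<open>Design: X n i j is the (i,j) entry of the n x p design matrix (rows i < n),
  columns indexed by the finite type 'p, so p = CARD('p).
  Responses / errors are functions nat => real, only entries i < n matter.\<close>

definition XtX :: "(nat \<Rightarrow> nat \<Rightarrow> 'p::finite \<Rightarrow> real) \<Rightarrow> nat \<Rightarrow> real^'p^'p" where
  "XtX X n = (\<chi> j k. \<Sum>i<n. X n i j * X n i k)"

definition Xty :: "(nat \<Rightarrow> nat \<Rightarrow> 'p::finite \<Rightarrow> real) \<Rightarrow> nat \<Rightarrow> (nat \<Rightarrow> real) \<Rightarrow> real^'p" where
  "Xty X n y = (\<chi> j. \<Sum>i<n. X n i j * y i)"

definition lsq :: "(nat \<Rightarrow> nat \<Rightarrow> 'p::finite \<Rightarrow> real) \<Rightarrow> nat \<Rightarrow> (nat \<Rightarrow> real) \<Rightarrow> real^'p" where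
  "lsq X n y = matrix_inv (XtX X n) *v Xty X n y"

definition al_obj :: "(nat \<Rightarrow> nat \<Rightarrow> 'p::finite \<Rightarrow> real) \<Rightarrow> (nat \<Rightarrow> 'p \<Rightarrow> real) \<Rightarrow> nat
     \<Rightarrow> (nat \<Rightarrow> real) \<Rightarrow> real^'p \<Rightarrow> real" where
  "al_obj X lam n y b =
     (\<Sum>i<n. (y i - (\<Sum>j\<in>UNIV. X n i j * b $ j))\<^sup>2)
     + 2 * (\<Sum>j\<in>UNIV. lam n j * \<bar>b $ j\<bar> / \<bar>lsq X n y $ j\<bar>)"

definition alasso :: "(nat \<Rightarrow> nat \<Rightarrow> 'p::finite \<Rightarrow> real) \<Rightarrow> (nat \<Rightarrow> 'p \<Rightarrow> real) \<Rightarrow> nat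
     \<Rightarrow> (nat \<Rightarrow> real) \<Rightarrow> real^'p" where
  "alasso X lam n y = (THE b. \<forall>b'. al_obj X lam n y b \<le> al_obj X lam n y b')"

definition resp :: "(nat \<Rightarrow> nat \<Rightarrow> 'p::finite \<Rightarrow> real) \<Rightarrow> nat \<Rightarrow> real^'p \<Rightarrow> (nat \<Rightarrow> real) \<Rightarrow> nat \<Rightarrow> real" where
  "resp X n \<beta> eps = (\<lambda>i. (\<Sum>j\<in>UNIV. X n i j * \<beta> $ j) + eps i)"

definition errs :: "real measure \<Rightarrow> nat \<Rightarrow> (nat \<Rightarrow> real) measure" where
  "errs F n = PiM {..<n} (\<lambda>_. F)"

text \<open>P_beta(E) where E is an event described in terms of the response y.\<close>
definition Pb :: "real measure \<Rightarrow> (nat \<Rightarrow> nat \<Rightarrow> 'p::finite \<Rightarrow> real) \<Rightarrow> nat \<Rightarrow> real^'p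
     \<Rightarrow> ((nat \<Rightarrow> real) \<Rightarrow> bool) \<Rightarrow> real" where
  "Pb F X n \<beta> E = measure (errs F n) {eps \<in> space (errs F n). E (resp X n \<beta> eps)}"

definition lam_star :: "(nat \<Rightarrow> 'p::finite \<Rightarrow> real) \<Rightarrow> nat \<Rightarrow> real" where
  "lam_star lam n = Max (range (lam n))"

end

(*
  With G = X'X and z = X'y the adaptive Lasso minimises the strictly convex function
  b'Gb - 2b'z + 2 sum_j w_j |b_j| with weights w_j = lam_j / |bLS_j|.  Comparing its value at the
  minimiser with its value at bLS gives  c n |bAL - bLS|^2 <= 2 sum_j lam_j <= 2 p lam*,  where c n
  bounds the smallest eigenvalue of X'X from below; and bLS - beta = (X'X)^-1 X'eps is small uniformly
  in beta by Chebyshev, since E |X'eps|^2 = sigma^2 tr(X'X) = O(n).  So lam*/n -> 0 gives uniform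
  consistency, and with it P(bAL_j = 0) -> 0 for every active j.

  Conversely, let lam_j = lam* >= r n along a subsequence and beta = t e_j.  If bAL_j were nonzero,
  the subgradient condition would give  w_j <= |(X'X (bAL - bLS))_j| <= K n |bAL - bLS|,  which is
  O(sqrt(n lam_j)), while w_j >= 2 lam_j / (3 t) as soon as bLS is within t/2 of beta.  For small t
  this is impossible, so bAL_j = 0, and hence |bAL - beta| >= t, with probability close to 1.
*)

theory Submission
  imports Defs
begin

section \<open>The weighted Lasso in Gram form\<close>

lemma nonneg_if_right_perturbations_nonneg:
  fixes x a :: real
  assumes "\<And>t. 0 < t \<Longrightarrow> t < 1 \<Longrightarrow> 0 \<le> x + t * a"
  shows "0 \<le> x"
proof (rule tendsto_lowerbound)
  have "((\<lambda>t. x + t * a) \<longlongrightarrow> x + 0 * a) (at_right 0)"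
    by (intro tendsto_intros)
  then show "((\<lambda>t. x + t * a) \<longlongrightarrow> x) (at_right 0)"
    by simp
  have "\<forall>\<^sub>F t in at_right 0. t \<in> {0<..<1::real}"
    by (rule eventually_at_right_real) simp
  then show "\<forall>\<^sub>F t in at_right 0. 0 \<le> x + t * a"
    by eventually_elim (auto intro: assms)
qed simp

definition weighted_l1 :: "real^'n \<Rightarrow> real^'n \<Rightarrow> real" where
  "weighted_l1 w b = (\<Sum>j\<in>UNIV. \<bar>w$j\<bar> * \<bar>b$j\<bar>)"

lemma weighted_l1_nonneg: "0 \<le> weighted_l1 w b"
  by (simp add: weighted_l1_def sum_nonneg)

lemma weighted_l1_0 [simp]: "weighted_l1 w 0 = 0"
  by (simp add: weighted_l1_def)

lemma weighted_l1_convex: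
  assumes "0 \<le> t" "t \<le> 1"
  shows "weighted_l1 w ((1 - t) *\<^sub>R x + t *\<^sub>R y) \<le> (1 - t) * weighted_l1 w x + t * weighted_l1 w y"
proof -
  have "\<bar>w$j\<bar> * \<bar>(1 - t) * x$j + t * y$j\<bar> \<le> (1 - t) * (\<bar>w$j\<bar> * \<bar>x$j\<bar>) + t * (\<bar>w$j\<bar> * \<bar>y$j\<bar>)" for j
  proof -
    have "\<bar>(1 - t) * x$j + t * y$j\<bar> \<le> (1 - t) * \<bar>x$j\<bar> + t * \<bar>y$j\<bar>"
      using assms abs_triangle_ineq[of "(1 - t) * x$j" "t * y$j"] by (simp add: abs_mult)
    then have "\<bar>w$j\<bar> * \<bar>(1 - t) * x$j + t * y$j\<bar> \<le> \<bar>w$j\<bar> * ((1 - t) * \<bar>x$j\<bar> + t * \<bar>y$j\<bar>)"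
      by (rule mult_left_mono) simp
    then show ?thesis
      by (simp add: algebra_simps)
  qed
  then show ?thesis
    by (simp add: weighted_l1_def sum_distrib_left sum.distrib[symmetric] sum_mono)
qed

lemma weighted_l1_add_axis:
  "weighted_l1 w (b + x *\<^sub>R axis j 1) = weighted_l1 w b + \<bar>w$j\<bar> * (\<bar>b$j + x\<bar> - \<bar>b$j\<bar>)"
proof -
  have "weighted_l1 w (b + x *\<^sub>R axis j 1)
      = (\<Sum>i\<in>UNIV. \<bar>w$i\<bar> * \<bar>b$i\<bar> + (if i = j then \<bar>w$j\<bar> * (\<bar>b$j + x\<bar> - \<bar>b$j\<bar>) else 0))"
    unfolding weighted_l1_def by (intro sum.cong) (auto simp: axis_def algebra_simps)
  then show ?thesis
    by (simp add: sum.distrib weighted_l1_def)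
qed

text \<open>For \<open>G = X'X\<close> and \<open>z = X'y\<close>, \<open>wlasso_obj G z w b + \<parallel>y\<parallel>\<^sup>2\<close> is the weighted Lasso
  criterion \<open>\<parallel>y - X b\<parallel>\<^sup>2 + 2 \<Sum>\<^sub>j \<bar>w\<^sub>j\<bar> \<bar>b\<^sub>j\<bar>\<close>.\<close>

definition wlasso_obj :: "real^'n^'n \<Rightarrow> real^'n \<Rightarrow> real^'n \<Rightarrow> real^'n \<Rightarrow> real" where
  "wlasso_obj G z w b = b \<bullet> (G *v b) - 2 * (b \<bullet> z) + 2 * weighted_l1 w b"

definition wlasso :: "real^'n^'n \<Rightarrow> real^'n \<Rightarrow> real^'n \<Rightarrow> real^'n" where
  "wlasso G z w = (THE b. \<forall>b'. wlasso_obj G z w b \<le> wlasso_obj G z w b')"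

lemma quadratic_along_line:
  fixes G :: "real^'n^'n"
  shows "(b + t *\<^sub>R d) \<bullet> (G *v (b + t *\<^sub>R d)) - 2 * ((b + t *\<^sub>R d) \<bullet> z) =
     b \<bullet> (G *v b) - 2 * (b \<bullet> z) + t * (d \<bullet> (G *v b) + b \<bullet> (G *v d) - 2 * (d \<bullet> z))
       + t\<^sup>2 * (d \<bullet> (G *v d))"
  by (simp add: matrix_vector_right_distrib matrix_vector_mult_scaleR inner_add_left inner_add_right
      algebra_simps power2_eq_square)

text \<open>Convexity of the penalty turns minimality into quadratic growth away from the minimiser.\<close>

lemma wlasso_obj_growth:
  fixes G :: "real^'n^'n"
  assumes min: "\<And>b'. wlasso_obj G z w bs \<le> wlasso_obj G z w b'"
  shows "wlasso_obj G z w bs + (b - bs) \<bullet> (G *v (b - bs)) \<le> wlasso_obj G z w b"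
proof -
  define d where "d = b - bs"
  define Q where "Q = bs \<bullet> (G *v bs) - 2 * (bs \<bullet> z)"
  define B where "B = d \<bullet> (G *v bs) + bs \<bullet> (G *v d) - 2 * (d \<bullet> z)"
  define a where "a = d \<bullet> (G *v d)"
  have along: "wlasso_obj G z w (bs + t *\<^sub>R d) = Q + t * B + t\<^sup>2 * a + 2 * weighted_l1 w (bs + t *\<^sub>R d)"
    for t
    unfolding wlasso_obj_def Q_def B_def a_def using quadratic_along_line[of bs t d G z] by simp
  have "0 \<le> (B + 2 * weighted_l1 w b - 2 * weighted_l1 w bs) + t * a" if t: "0 < t" "t < 1" for t
  proof -
    have "bs + t *\<^sub>R d = (1 - t) *\<^sub>R bs + t *\<^sub>R b"
      by (simp add: d_def algebra_simps)
    then have "weighted_l1 w (bs + t *\<^sub>R d) \<le> (1 - t) * weighted_l1 w bs + t * weighted_l1 w b"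
      using weighted_l1_convex[of t w bs b] t by simp
    moreover have "Q + 2 * weighted_l1 w bs \<le> Q + t * B + t\<^sup>2 * a + 2 * weighted_l1 w (bs + t *\<^sub>R d)"
      using min[of "bs + t *\<^sub>R d"] unfolding along by (simp add: wlasso_obj_def Q_def)
    ultimately have "0 \<le> t * B + t\<^sup>2 * a + 2 * t * weighted_l1 w b - 2 * t * weighted_l1 w bs"
      by (simp add: algebra_simps)
    then have "0 \<le> t * ((B + 2 * weighted_l1 w b - 2 * weighted_l1 w bs) + t * a)"
      by (simp add: algebra_simps power2_eq_square)
    then show ?thesis
      using t by (simp add: zero_le_mult_iff)
  qed
  then have "0 \<le> B + 2 * weighted_l1 w b - 2 * weighted_l1 w bs"
    by (rule nonneg_if_right_perturbations_nonneg)
  moreover have "wlasso_obj G z w b = Q + B + a + 2 * weighted_l1 w b"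
    using along[of 1] by (simp add: d_def)
  ultimately show ?thesis
    by (simp add: wlasso_obj_def Q_def a_def d_def)
qed

lemma wlasso_obj_has_minimiser:
  fixes G :: "real^'n^'n"
  assumes pd: "\<And>v. c * (norm v)\<^sup>2 \<le> v \<bullet> (G *v v)" and c: "0 < c"
  shows "\<exists>b. \<forall>b'. wlasso_obj G z w b \<le> wlasso_obj G z w b'"
proof -
  define R where "R = 2 * norm z / c + 1"
  have R: "0 < R"
    using c by (simp add: R_def add_nonneg_pos)
  have "continuous_on (cball 0 R) (wlasso_obj G z w)"
    unfolding wlasso_obj_def weighted_l1_def by (intro continuous_intros)
  then have "\<exists>b\<in>cball 0 R. \<forall>y\<in>cball 0 R. wlasso_obj G z w b \<le> wlasso_obj G z w y"
    using R by (intro continuous_attains_inf compact_cball) auto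
  then obtain b where b: "\<And>y. y \<in> cball 0 R \<Longrightarrow> wlasso_obj G z w b \<le> wlasso_obj G z w y"
    by blast
  have "wlasso_obj G z w b \<le> wlasso_obj G z w b'" for b'
  proof (cases "b' \<in> cball 0 R")
    case False
    then have "c * R < c * norm b'"
      using c by simp
    moreover have "c * R = 2 * norm z + c"
      using c by (simp add: R_def field_simps)
    ultimately have "2 * norm z < c * norm b'"
      using c by linarith
    then have "0 < norm b' * (c * norm b' - 2 * norm z)"
      using False R by (intro mult_pos_pos) auto
    also have "\<dots> \<le> wlasso_obj G z w b'"
      using pd[of b'] norm_cauchy_schwarz[of b' z] weighted_l1_nonneg[of w b']
      by (simp add: wlasso_obj_def algebra_simps power2_eq_square)
    finally show ?thesis
      using b[of 0] R by (simp add: wlasso_obj_def)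
  qed (rule b)
  then show ?thesis by blast
qed

lemma wlasso_obj_minimiser_unique:
  fixes G :: "real^'n^'n"
  assumes pd: "\<And>v. c * (norm v)\<^sup>2 \<le> v \<bullet> (G *v v)" and c: "0 < c"
    and min1: "\<And>b'. wlasso_obj G z w b1 \<le> wlasso_obj G z w b'"
    and min2: "\<And>b'. wlasso_obj G z w b2 \<le> wlasso_obj G z w b'"
  shows "b1 = b2"
proof -
  have "(b2 - b1) \<bullet> (G *v (b2 - b1)) \<le> 0"
    using wlasso_obj_growth[OF min1, of b2] min2[of b1] by simp
  then have "c * (norm (b2 - b1))\<^sup>2 \<le> 0"
    using pd[of "b2 - b1"] by simp
  then show ?thesis
    using c by (simp add: mult_le_0_iff)
qed

lemma wlasso_minimal:
  fixes G :: "real^'n^'n"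
  assumes "\<And>v. c * (norm v)\<^sup>2 \<le> v \<bullet> (G *v v)" "0 < c"
  shows "wlasso_obj G z w (wlasso G z w) \<le> wlasso_obj G z w b"
proof -
  have "\<exists>!b. \<forall>b'. wlasso_obj G z w b \<le> wlasso_obj G z w b'"
    using wlasso_obj_has_minimiser[OF assms] wlasso_obj_minimiser_unique[OF assms] by blast
  from theI'[OF this] show ?thesis
    unfolding wlasso_def by blast
qed

lemma weighted_l1_cross_diff_le:
  "(weighted_l1 v x - weighted_l1 w x) - (weighted_l1 v y - weighted_l1 w y)
     \<le> real CARD('n) * (norm (v - w) * norm (x - y))"
  for v w x y :: "real^'n"
proof -
  have "(\<bar>v$j\<bar> - \<bar>w$j\<bar>) * (\<bar>x$j\<bar> - \<bar>y$j\<bar>) \<le> norm (v - w) * norm (x - y)" for j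
  proof -
    have "(\<bar>v$j\<bar> - \<bar>w$j\<bar>) * (\<bar>x$j\<bar> - \<bar>y$j\<bar>) \<le> \<bar>v$j - w$j\<bar> * \<bar>x$j - y$j\<bar>"
    proof -
      have "(\<bar>v$j\<bar> - \<bar>w$j\<bar>) * (\<bar>x$j\<bar> - \<bar>y$j\<bar>) \<le> \<bar>\<bar>v$j\<bar> - \<bar>w$j\<bar>\<bar> * \<bar>\<bar>x$j\<bar> - \<bar>y$j\<bar>\<bar>"
        by (simp flip: abs_mult)
      also have "\<dots> \<le> \<bar>v$j - w$j\<bar> * \<bar>x$j - y$j\<bar>"
        by (intro mult_mono abs_triangle_ineq3) auto
      finally show ?thesis .
    qed
    also have "\<dots> \<le> norm (v - w) * norm (x - y)"
      using component_le_norm_cart[of "v - w" j] component_le_norm_cart[of "x - y" j]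
      by (intro mult_mono) auto
    finally show ?thesis .
  qed
  then have "(\<Sum>j\<in>UNIV. (\<bar>v$j\<bar> - \<bar>w$j\<bar>) * (\<bar>x$j\<bar> - \<bar>y$j\<bar>))
      \<le> (\<Sum>j\<in>(UNIV::'n set). norm (v - w) * norm (x - y))"
    by (rule sum_mono)
  then show ?thesis
    by (simp add: weighted_l1_def algebra_simps sum_subtractf sum.distrib)
qed

lemma wlasso_lipschitz:
  fixes G :: "real^'n^'n"
  assumes pd: "\<And>v. c * (norm v)\<^sup>2 \<le> v \<bullet> (G *v v)" and c: "0 < c"
  shows "dist (wlasso G z1 w1) (wlasso G z2 w2) \<le> (dist z1 z2 + real CARD('n) * dist w1 w2) / c"
proof -
  define b1 b2 where "b1 = wlasso G z1 w1" and "b2 = wlasso G z2 w2"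
  define d where "d = b2 - b1"
  note growth = wlasso_obj_growth[OF wlasso_minimal[OF pd c]]
  have "wlasso_obj G z1 w1 b1 + d \<bullet> (G *v d) \<le> wlasso_obj G z1 w1 b2"
    using growth[of z1 w1 b2] by (simp add: b1_def d_def)
  moreover have "wlasso_obj G z2 w2 b2 + d \<bullet> (G *v d) \<le> wlasso_obj G z2 w2 b1"
  proof -
    have "b1 - b2 = - d"
      by (simp add: d_def)
    then show ?thesis
      using growth[of z2 w2 b1] by (simp add: b2_def vec.neg)
  qed
  ultimately have "d \<bullet> (G *v d) \<le> d \<bullet> (z2 - z1) + (weighted_l1 w1 b2 - weighted_l1 w2 b2) - (weighted_l1 w1 b1 - weighted_l1 w2 b1)"
    by (simp add: wlasso_obj_def d_def inner_diff_left inner_diff_right algebra_simps)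
  also have "\<dots> \<le> norm d * norm (z1 - z2) + real CARD('n) * (norm (w1 - w2) * norm d)"
    using norm_cauchy_schwarz[of d "z2 - z1"] weighted_l1_cross_diff_le[where v=w1 and w=w2 and x=b2 and y=b1]
    by (simp add: d_def norm_minus_commute)
  finally have "c * (norm d)\<^sup>2 \<le> norm d * (norm (z1 - z2) + real CARD('n) * norm (w1 - w2))"
    using pd[of d] by (simp add: algebra_simps)
  then have "c * norm d \<le> norm (z1 - z2) + real CARD('n) * norm (w1 - w2)"
    by (cases "norm d = 0") (auto simp: power2_eq_square)
  then show ?thesis
    using c by (simp add: b1_def b2_def d_def dist_norm norm_minus_commute field_simps)
qed

lemma continuous_on_wlasso:
  fixes G :: "real^'n^'n"
  assumes pd: "\<And>v. c * (norm v)\<^sup>2 \<le> v \<bullet> (G *v v)" and c: "0 < c"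
  shows "continuous_on UNIV (\<lambda>zw. wlasso G (fst zw) (snd zw))"
proof (rule lipschitz_on_continuous_on)
  show "((1 + real CARD('n)) / c)-lipschitz_on UNIV (\<lambda>zw. wlasso G (fst zw) (snd zw))"
  proof (rule lipschitz_onI)
    fix x y :: "(real^'n) \<times> (real^'n)"
    have "dist (wlasso G (fst x) (snd x)) (wlasso G (fst y) (snd y))
        \<le> (dist (fst x) (fst y) + real CARD('n) * dist (snd x) (snd y)) / c"
      by (rule wlasso_lipschitz[OF pd c])
    also have "\<dots> \<le> (dist x y + real CARD('n) * dist x y) / c"
      using c dist_fst_le[of x y] dist_snd_le[of x y] by (intro divide_right_mono add_mono mult_left_mono) auto
    finally show "dist (wlasso G (fst x) (snd x)) (wlasso G (fst y) (snd y)) \<le> (1 + real CARD('n)) / c * dist x y"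
      by (simp add: algebra_simps)
  qed (use c in auto)
qed

lemma wlasso_obj_add_axis:
  fixes G :: "real^'n^'n"
  assumes sym: "\<And>u v. u \<bullet> (G *v v) = v \<bullet> (G *v u)"
  shows "wlasso_obj G z w (b + t *\<^sub>R axis j 1) = wlasso_obj G z w b + 2 * t * (G *v b - z) $ j
           + t\<^sup>2 * G $ j $ j + 2 * \<bar>w $ j\<bar> * (\<bar>b $ j + t\<bar> - \<bar>b $ j\<bar>)"
proof -
  have "axis j 1 \<bullet> v = v $ j" for v :: "real^'n"
    by (simp add: inner_axis')
  moreover have "(G *v axis j 1) $ j = G $ j $ j"
    by (simp add: matrix_vector_mult_def axis_def if_distrib cong: if_cong)
  moreover have "b \<bullet> (G *v axis j 1) = axis j 1 \<bullet> (G *v b)"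
    by (rule sym)
  ultimately show ?thesis
    unfolding wlasso_obj_def weighted_l1_add_axis quadratic_along_line
    by (simp add: algebra_simps)
qed

text \<open>The subgradient condition, obtained by moving the \<open>j\<close>-th coordinate towards \<open>0\<close>.\<close>

lemma wlasso_obj_minimiser_weight_le:
  fixes G :: "real^'n^'n"
  assumes sym: "\<And>u v. u \<bullet> (G *v v) = v \<bullet> (G *v u)"
    and min: "\<And>b'. wlasso_obj G z w b \<le> wlasso_obj G z w b'"
    and nz: "b $ j \<noteq> 0"
  shows "\<bar>w $ j\<bar> \<le> \<bar>(G *v b - z) $ j\<bar>"
proof -
  define A where "A = (G *v b - z) $ j"
  define s where "s = sgn (b $ j)"
  have "0 \<le> (2 * \<bar>A\<bar> - 2 * \<bar>w $ j\<bar>) + t * (\<bar>b $ j\<bar> * G $ j $ j)" if t: "0 < t" "t < 1" for t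
  proof -
    define \<tau> where "\<tau> = t * \<bar>b $ j\<bar>"
    have \<tau>: "0 < \<tau>" "\<tau> \<le> \<bar>b $ j\<bar>"
      using t nz by (auto simp: \<tau>_def mult_le_cancel_right1)
    have shrink: "\<bar>b $ j + - (\<tau> * s)\<bar> = \<bar>b $ j\<bar> - \<tau>" and descent: "- (\<tau> * s) * A \<le> \<tau> * \<bar>A\<bar>"
      using \<tau> nz by (cases "b $ j > 0"; simp add: s_def abs_if)+
    have sq: "(- (\<tau> * s))\<^sup>2 = \<tau>\<^sup>2"
      using nz by (cases "b $ j > 0") (simp_all add: s_def)
    have "0 \<le> 2 * (- (\<tau> * s)) * A + (- (\<tau> * s))\<^sup>2 * G $ j $ j
                + 2 * \<bar>w $ j\<bar> * (\<bar>b $ j + - (\<tau> * s)\<bar> - \<bar>b $ j\<bar>)"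
      using min[of "b + (- (\<tau> * s)) *\<^sub>R axis j 1"]
      unfolding wlasso_obj_add_axis[OF sym] A_def[symmetric] by linarith
    then have "0 \<le> 2 * (- (\<tau> * s) * A) + \<tau>\<^sup>2 * G $ j $ j - 2 * \<bar>w $ j\<bar> * \<tau>"
      unfolding shrink sq by (simp add: algebra_simps)
    then have "0 \<le> 2 * (\<tau> * \<bar>A\<bar>) + \<tau>\<^sup>2 * G $ j $ j - 2 * \<bar>w $ j\<bar> * \<tau>"
      using descent by linarith
    then have "0 \<le> \<tau> * ((2 * \<bar>A\<bar> - 2 * \<bar>w $ j\<bar>) + \<tau> * G $ j $ j)"
      by (simp add: algebra_simps power2_eq_square)
    then have "0 \<le> (2 * \<bar>A\<bar> - 2 * \<bar>w $ j\<bar>) + \<tau> * G $ j $ j"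
      using \<tau>(1) by (simp add: zero_le_mult_iff)
    then show ?thesis
      unfolding \<tau>_def by (simp only: mult.assoc)
  qed
  then have "0 \<le> 2 * \<bar>A\<bar> - 2 * \<bar>w $ j\<bar>"
    by (rule nonneg_if_right_perturbations_nonneg)
  then show ?thesis
    by (simp add: A_def)
qed

lemma wlasso_obj_centered:
  fixes G :: "real^'n^'n"
  assumes sym: "\<And>u v. u \<bullet> (G *v v) = v \<bullet> (G *v u)"
  shows "wlasso_obj G (G *v L) w x = (x - L) \<bullet> (G *v (x - L)) - L \<bullet> (G *v L) + 2 * weighted_l1 w x"
  using sym[of L x]
  by (simp add: wlasso_obj_def matrix_vector_mult_diff_distrib inner_diff_left inner_diff_right)

section \<open>Eigenvalue bounds\<close>

lemma norm_matrix_vector_le_entry_sum: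
  fixes M :: "real^'n^'m"
  shows "norm (M *v v) \<le> (\<Sum>i\<in>UNIV. \<Sum>j\<in>UNIV. \<bar>M $ i $ j\<bar>) * norm v"
  using onorm[OF matrix_vector_mul_bounded_linear, of M v] onorm_le_matrix_component_sum[of M]
  by (meson mult_right_mono norm_ge_zero order_trans)

lemma diagonal_sum_le:
  fixes M :: "real^'n^'n"
  assumes "\<And>v. norm (M *v v) \<le> k * norm v"
  shows "(\<Sum>j\<in>UNIV. M $ j $ j) \<le> real CARD('n) * k"
proof -
  have "M $ j $ j \<le> k" for j
  proof -
    have "M $ j $ j = (M *v axis j 1) $ j"
      by (simp add: matrix_vector_mult_def axis_def if_distrib cong: if_cong)
    also have "\<dots> \<le> norm (M *v axis j 1)"
      by (metis abs_ge_self component_le_norm_cart order_trans)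
    also have "\<dots> \<le> k"
      using assms[of "axis j 1"] by simp
    finally show ?thesis .
  qed
  then have "(\<Sum>j\<in>UNIV. M $ j $ j) \<le> (\<Sum>j\<in>(UNIV::'n set). k)"
    by (intro sum_mono)
  then show ?thesis
    by simp
qed

lemma pos_def_coercive:
  fixes C :: "real^'n^'n"
  assumes pd: "\<And>v. v \<noteq> 0 \<Longrightarrow> 0 < v \<bullet> (C *v v)"
  obtains c where "0 < c" "\<And>v. c * (norm v)\<^sup>2 \<le> v \<bullet> (C *v v)"
proof -
  have "continuous_on (sphere 0 1) (\<lambda>u::real^'n. u \<bullet> (C *v u))"
    by (intro continuous_intros)
  moreover have "axis undefined 1 \<in> sphere (0::real^'n) 1"
    by simp
  ultimately obtain u0 where u0: "u0 \<in> sphere 0 1"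
    and min: "\<And>u. u \<in> sphere 0 1 \<Longrightarrow> u0 \<bullet> (C *v u0) \<le> u \<bullet> (C *v u)"
    using continuous_attains_inf[OF compact_sphere, of 0 1] by blast
  have "(u0 \<bullet> (C *v u0)) * (norm v)\<^sup>2 \<le> v \<bullet> (C *v v)" for v
  proof (cases "v = 0")
    case False
    define u where "u = (1 / norm v) *\<^sub>R v"
    have "v \<bullet> (C *v v) = (norm v)\<^sup>2 * (u \<bullet> (C *v u))"
      using False by (simp add: u_def matrix_vector_mult_scaleR power2_eq_square)
    moreover have "u0 \<bullet> (C *v u0) \<le> u \<bullet> (C *v u)"
      using False by (intro min) (simp add: u_def)
    ultimately show ?thesis
      by (metis mult.commute mult_right_mono zero_le_power2)
  qed simp
  moreover have "0 < u0 \<bullet> (C *v u0)"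
    using u0 by (intro pd) auto
  ultimately show ?thesis
    using that by blast
qed

lemma perturbed_quadratic_form_bounds:
  fixes C D :: "real^'n^'n"
  assumes lower: "\<And>v. c * (norm v)\<^sup>2 \<le> v \<bullet> (C *v v)"
    and small: "(\<Sum>i\<in>UNIV. \<Sum>j\<in>UNIV. \<bar>D $ i $ j\<bar>) \<le> c / 2"
  shows "c / 2 * (norm v)\<^sup>2 \<le> v \<bullet> ((C + D) *v v)"
    and "norm ((C + D) *v v) \<le> ((\<Sum>i\<in>UNIV. \<Sum>j\<in>UNIV. \<bar>C $ i $ j\<bar>) + c) * norm v"
proof -
  have "0 \<le> (\<Sum>i\<in>UNIV. \<Sum>j\<in>UNIV. \<bar>D $ i $ j\<bar>)"
    by (simp add: sum_nonneg)
  then have c: "0 \<le> c"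
    using small by linarith
  have Dv: "norm (D *v v) \<le> c / 2 * norm v"
    using norm_matrix_vector_le_entry_sum[of D v] mult_right_mono[OF small norm_ge_zero[of v]]
    by linarith
  have "- (v \<bullet> (D *v v)) \<le> norm v * norm (D *v v)"
    using norm_cauchy_schwarz[of "- v" "D *v v"] by simp
  also have "\<dots> \<le> norm v * (c / 2 * norm v)"
    by (intro mult_left_mono Dv) simp
  also have "\<dots> = c / 2 * (norm v)\<^sup>2"
    by (simp add: power2_eq_square)
  finally show "c / 2 * (norm v)\<^sup>2 \<le> v \<bullet> ((C + D) *v v)"
    using lower[of v] by (simp add: matrix_vector_mult_add_rdistrib inner_add_right)
  have "norm ((C + D) *v v) \<le> norm (C *v v) + norm (D *v v)"
    by (simp add: matrix_vector_mult_add_rdistrib norm_triangle_ineq)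
  also have "\<dots> \<le> (\<Sum>i\<in>UNIV. \<Sum>j\<in>UNIV. \<bar>C $ i $ j\<bar>) * norm v + c / 2 * norm v"
    by (intro add_mono norm_matrix_vector_le_entry_sum Dv)
  also have "\<dots> \<le> ((\<Sum>i\<in>UNIV. \<Sum>j\<in>UNIV. \<bar>C $ i $ j\<bar>) + c) * norm v"
    using c by (simp add: algebra_simps)
  finally show "norm ((C + D) *v v) \<le> ((\<Sum>i\<in>UNIV. \<Sum>j\<in>UNIV. \<bar>C $ i $ j\<bar>) + c) * norm v" .
qed

lemma eventually_scaled_gram_bounds:
  fixes A :: "nat \<Rightarrow> real^'n^'n"
  assumes lim: "(\<lambda>n. (1 / real n) *\<^sub>R A n) \<longlonglongrightarrow> C"
    and pd: "\<And>v. v \<noteq> 0 \<Longrightarrow> 0 < v \<bullet> (C *v v)"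
  obtains c K N where "0 < c" "0 < K" "0 < N"
    "\<And>n v. N \<le> n \<Longrightarrow> c * real n * (norm v)\<^sup>2 \<le> v \<bullet> (A n *v v)"
    "\<And>n v. N \<le> n \<Longrightarrow> norm (A n *v v) \<le> K * real n * norm v"
proof -
  obtain c where c: "0 < c" and lower: "\<And>v. c * (norm v)\<^sup>2 \<le> v \<bullet> (C *v v)"
    using pos_def_coercive[OF pd] by blast
  define s where "s M = (\<Sum>i\<in>UNIV. \<Sum>j\<in>UNIV. \<bar>M $ i $ j\<bar>)" for M :: "real^'n^'n"
  define D where "D n = (1 / real n) *\<^sub>R A n - C" for n
  have "(\<lambda>n. s (D n)) \<longlonglongrightarrow> s 0"
    unfolding s_def D_def by (intro tendsto_intros tendsto_vec_nth LIM_zero lim)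
  then have "\<forall>\<^sub>F n in sequentially. s (D n) < c / 2"
    using c by (intro order_tendstoD) (auto simp: s_def)
  moreover have "\<forall>\<^sub>F n in sequentially. 0 < n"
    by (rule eventually_gt_at_top)
  ultimately have "\<forall>\<^sub>F n in sequentially. 0 < n \<and> s (D n) < c / 2"
    by eventually_elim simp
  then obtain N where N: "\<And>n. N \<le> n \<Longrightarrow> 0 < n \<and> s (D n) < c / 2"
    by (auto simp: eventually_sequentially)
  note bounds = perturbed_quadratic_form_bounds[OF lower, of "D n" for n, folded s_def]
  have An: "A n = real n *\<^sub>R (C + D n)" if "N \<le> n" for n
    using N[OF that] by (simp add: D_def)
  show ?thesis
  proof
    show "0 < c / 2" "0 < s C + c" "0 < N"
      using c N[of N] by (auto simp: s_def sum_nonneg intro: add_nonneg_pos)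
    fix n v
    assume n: "N \<le> n"
    then have small: "s (D n) \<le> c / 2"
      using N less_imp_le by blast
    from mult_left_mono[OF bounds(1)[OF small, of v], of "real n"]
    show "c / 2 * real n * (norm v)\<^sup>2 \<le> v \<bullet> (A n *v v)"
      by (simp add: An[OF n] scaleR_matrix_vector_assoc[symmetric] mult_ac)
    from mult_left_mono[OF bounds(2)[OF small, of v], of "real n"]
    show "norm (A n *v v) \<le> (s C + c) * real n * norm v"
      by (simp add: An[OF n] scaleR_matrix_vector_assoc[symmetric] mult_ac s_def)
  qed
qed

section \<open>Limits of nonnegative sequences\<close>

lemma tendsto_0_if_SUP_tendsto_0:
  fixes f :: "nat \<Rightarrow> 'a \<Rightarrow> real"
  assumes lim: "(\<lambda>n. SUP x. f n x) \<longlonglongrightarrow> 0"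
    and nonneg: "\<And>n x. 0 \<le> f n x" and bdd: "\<And>n. bdd_above (range (f n))"
  shows "(\<lambda>n. f n x) \<longlonglongrightarrow> 0"
proof (rule tendsto_sandwich[OF _ _ tendsto_const lim])
  show "\<forall>\<^sub>F n in sequentially. 0 \<le> f n x"
    by (simp add: nonneg)
  show "\<forall>\<^sub>F n in sequentially. f n x \<le> (SUP x. f n x)"
    by (intro always_eventually allI cSUP_upper bdd UNIV_I)
qed

lemma frequently_ge_if_not_tendsto_0:
  fixes f :: "nat \<Rightarrow> real"
  assumes nonneg: "\<And>n. 0 \<le> f n" and not_lim: "\<not> f \<longlonglongrightarrow> 0"
  obtains r where "0 < r" "\<exists>\<^sub>F n in sequentially. r \<le> f n"
proof -
  have "\<not> (\<forall>r>0. \<forall>\<^sub>F n in sequentially. f n < r)"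
  proof
    assume small: "\<forall>r>0. \<forall>\<^sub>F n in sequentially. f n < r"
    have "f \<longlonglongrightarrow> 0"
    proof (rule order_tendstoI)
      show "\<forall>\<^sub>F n in sequentially. a < f n" if "a < 0" for a
        using that nonneg by (intro always_eventually allI) (metis less_le_trans)
      show "\<forall>\<^sub>F n in sequentially. f n < a" if "0 < a" for a
        using small that by blast
    qed
    with not_lim show False ..
  qed
  then show ?thesis
    using that by (auto simp: not_eventually not_less)
qed

lemma frequently_ex_finite:
  fixes P :: "'a::finite \<Rightarrow> 'b \<Rightarrow> bool"
  assumes "\<exists>\<^sub>F x in F. \<exists>j. P j x"
  obtains j where "\<exists>\<^sub>F x in F. P j x"
proof -
  have "\<not> (\<forall>j. \<forall>\<^sub>F x in F. \<not> P j x)"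
  proof
    assume "\<forall>j. \<forall>\<^sub>F x in F. \<not> P j x"
    then have "\<forall>\<^sub>F x in F. \<forall>j. \<not> P j x"
      by (simp add: eventually_all_finite)
    with assms show False
      by (simp add: frequently_def)
  qed
  then show ?thesis
    using that by (auto simp: not_eventually)
qed

lemma not_tendsto_0_if_frequently_ge_1_minus:
  fixes b f :: "nat \<Rightarrow> real"
  assumes b: "b \<longlonglongrightarrow> 0" and frequently_large: "\<exists>\<^sub>F n in sequentially. 1 - b n \<le> f n"
  shows "\<not> f \<longlonglongrightarrow> 0"
proof
  assume "f \<longlonglongrightarrow> 0"
  then have "\<forall>\<^sub>F n in sequentially. f n < 1 / 2"
    by (rule order_tendstoD) simp
  moreover have "\<forall>\<^sub>F n in sequentially. b n < 1 / 2"
    using b by (rule order_tendstoD) simp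
  ultimately have "\<forall>\<^sub>F n in sequentially. \<not> 1 - b n \<le> f n"
    by eventually_elim simp
  with frequently_large show False
    by (simp add: frequently_def)
qed

section \<open>The adaptive Lasso as a weighted Lasso\<close>

lemma inner_XtX:
  "u \<bullet> (XtX X n *v v) = (\<Sum>i<n. (\<Sum>j\<in>UNIV. X n i j * u $ j) * (\<Sum>k\<in>UNIV. X n i k * v $ k))"
proof -
  have "u \<bullet> (XtX X n *v v) = (\<Sum>j\<in>UNIV. \<Sum>k\<in>UNIV. \<Sum>i<n. (X n i j * u $ j) * (X n i k * v $ k))"
    by (simp add: inner_vec_def matrix_vector_mult_def XtX_def sum_distrib_left sum_distrib_right
        algebra_simps)
  also have "\<dots> = (\<Sum>i<n. \<Sum>j\<in>UNIV. \<Sum>k\<in>UNIV. (X n i j * u $ j) * (X n i k * v $ k))"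
    by (simp add: sum.swap[of _ UNIV "{..<n}"])
  also have "\<dots> = (\<Sum>i<n. (\<Sum>j\<in>UNIV. X n i j * u $ j) * (\<Sum>k\<in>UNIV. X n i k * v $ k))"
    by (simp only: sum_product)
  finally show ?thesis .
qed

lemma XtX_symmetric: "u \<bullet> (XtX X n *v v) = v \<bullet> (XtX X n *v u)"
  unfolding inner_XtX by (simp add: mult.commute)

lemma inner_Xty: "u \<bullet> Xty X n y = (\<Sum>i<n. y i * (\<Sum>j\<in>UNIV. X n i j * u $ j))"
proof -
  have "u \<bullet> Xty X n y = (\<Sum>j\<in>UNIV. \<Sum>i<n. y i * (X n i j * u $ j))"
    by (simp add: inner_vec_def Xty_def sum_distrib_left algebra_simps)
  then show ?thesis
    by (simp add: sum.swap[of _ UNIV "{..<n}"] sum_distrib_left)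
qed

lemma Xty_resp: "Xty X n (resp X n \<beta> eps) = XtX X n *v \<beta> + Xty X n eps"
  by (simp add: vec_eq_iff Xty_def XtX_def resp_def matrix_vector_mult_def algebra_simps
      sum.distrib sum_distrib_left sum_distrib_right sum.swap[of _ UNIV "{..<n}"])

lemma XtX_mult_lsq:
  assumes pd: "\<And>v. a * (norm v)\<^sup>2 \<le> v \<bullet> (XtX X n *v v)" and a: "0 < a"
  shows "XtX X n *v lsq X n y = Xty X n y"
proof -
  have "v = 0" if "XtX X n *v v = 0" for v
    using pd[of v] that a by (simp add: mult_le_0_iff)
  then have "invertible (XtX X n)"
    by (simp add: invertible_left_inverse matrix_left_invertible_ker)
  then have "XtX X n ** matrix_inv (XtX X n) = mat 1 \<and> matrix_inv (XtX X n) ** XtX X n = mat 1"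
    unfolding invertible_def matrix_inv_def by (rule someI_ex)
  then show ?thesis
    by (simp add: lsq_def matrix_vector_mul_assoc)
qed

text \<open>Where \<open>lsq\<close> vanishes, division by zero gives weight \<open>0\<close>, exactly as in \<open>al_obj\<close>; this is
  why the events \<open>lsq X n y $ j = 0\<close> never need to be excluded.\<close>

definition al_weights :: "(nat \<Rightarrow> nat \<Rightarrow> 'p::finite \<Rightarrow> real) \<Rightarrow> (nat \<Rightarrow> 'p \<Rightarrow> real) \<Rightarrow> nat
     \<Rightarrow> (nat \<Rightarrow> real) \<Rightarrow> real^'p" where
  "al_weights X lam n y = (\<chi> j. lam n j / \<bar>lsq X n y $ j\<bar>)"

lemma al_obj_eq_wlasso_obj:
  assumes lam: "\<And>n j. 0 \<le> lam n j"
  shows "al_obj X lam n y b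
           = (\<Sum>i<n. (y i)\<^sup>2) + wlasso_obj (XtX X n) (Xty X n y) (al_weights X lam n y) b"
proof -
  have "(\<Sum>i<n. (y i - (\<Sum>j\<in>UNIV. X n i j * b $ j))\<^sup>2) =
     (\<Sum>i<n. (y i)\<^sup>2) - 2 * (\<Sum>i<n. y i * (\<Sum>j\<in>UNIV. X n i j * b $ j))
       + (\<Sum>i<n. (\<Sum>j\<in>UNIV. X n i j * b $ j) * (\<Sum>k\<in>UNIV. X n i k * b $ k))"
    by (simp add: power2_eq_square algebra_simps sum.distrib sum_subtractf sum_distrib_left)
  moreover have "(\<Sum>j\<in>UNIV. lam n j * \<bar>b $ j\<bar> / \<bar>lsq X n y $ j\<bar>) = weighted_l1 (al_weights X lam n y) b"
    using lam by (simp add: weighted_l1_def al_weights_def)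
  ultimately show ?thesis
    unfolding al_obj_def wlasso_obj_def inner_Xty inner_XtX by simp
qed

lemma alasso_eq_wlasso:
  assumes "\<And>n j. 0 \<le> lam n j"
  shows "alasso X lam n y = wlasso (XtX X n) (Xty X n y) (al_weights X lam n y)"
  unfolding alasso_def wlasso_def al_obj_eq_wlasso_obj[OF assms] by simp

lemma lsq_resp_error_le:
  assumes pd: "\<And>v. a * (norm v)\<^sup>2 \<le> v \<bullet> (XtX X n *v v)" and a: "0 < a"
  shows "a * norm (lsq X n (resp X n \<beta> eps) - \<beta>) \<le> norm (Xty X n eps)"
proof -
  define d where "d = lsq X n (resp X n \<beta> eps) - \<beta>"
  have "XtX X n *v d = Xty X n eps"
    using XtX_mult_lsq[OF pd a] by (simp add: d_def Xty_resp matrix_vector_mult_diff_distrib)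
  then have "a * (norm d)\<^sup>2 \<le> norm d * norm (Xty X n eps)"
    using pd[of d] norm_cauchy_schwarz[of d "Xty X n eps"] by simp
  then show ?thesis
    by (cases "norm d = 0") (auto simp: d_def power2_eq_square)
qed

lemma alasso_lsq_dist_sq_le:
  assumes lam: "\<And>n j. 0 \<le> lam n j"
    and pd: "\<And>v. a * (norm v)\<^sup>2 \<le> v \<bullet> (XtX X n *v v)" and a: "0 < a"
  shows "a * (norm (alasso X lam n y - lsq X n y))\<^sup>2 \<le> 2 * (\<Sum>j\<in>UNIV. lam n j)"
proof -
  let ?b = "alasso X lam n y" and ?L = "lsq X n y" and ?G = "XtX X n" and ?w = "al_weights X lam n y"
  have "wlasso_obj ?G (?G *v ?L) ?w ?b \<le> wlasso_obj ?G (?G *v ?L) ?w ?L"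
    using wlasso_minimal[OF pd a] by (simp add: alasso_eq_wlasso[OF lam] XtX_mult_lsq[OF pd a])
  then have "(?b - ?L) \<bullet> (?G *v (?b - ?L)) \<le> 2 * weighted_l1 ?w ?L"
    using weighted_l1_nonneg[of ?w ?b] by (simp add: wlasso_obj_centered XtX_symmetric)
  moreover have "weighted_l1 ?w ?L \<le> (\<Sum>j\<in>UNIV. lam n j)"
    unfolding weighted_l1_def
  proof (rule sum_mono)
    fix j
    show "\<bar>?w $ j\<bar> * \<bar>?L $ j\<bar> \<le> lam n j"
      using lam[of n j] by (cases "?L $ j = 0") (auto simp: al_weights_def)
  qed
  ultimately show ?thesis
    using pd[of "?b - ?L"] by linarith
qed

lemma al_weight_le_if_alasso_nonzero:
  assumes lam: "\<And>n j. 0 \<le> lam n j"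
    and pd: "\<And>v. a * (norm v)\<^sup>2 \<le> v \<bullet> (XtX X n *v v)" and a: "0 < a"
    and up: "\<And>v. norm (XtX X n *v v) \<le> k * norm v"
    and nz: "alasso X lam n y $ j \<noteq> 0"
  shows "\<bar>al_weights X lam n y $ j\<bar> \<le> k * norm (alasso X lam n y - lsq X n y)"
proof -
  let ?b = "alasso X lam n y" and ?L = "lsq X n y" and ?G = "XtX X n"
  have "\<bar>al_weights X lam n y $ j\<bar> \<le> \<bar>(?G *v ?b - Xty X n y) $ j\<bar>"
    using wlasso_obj_minimiser_weight_le[OF XtX_symmetric wlasso_minimal[OF pd a]] nz
    by (simp add: alasso_eq_wlasso[OF lam])
  also have "\<dots> = \<bar>(?G *v (?b - ?L)) $ j\<bar>"
    by (simp add: XtX_mult_lsq[OF pd a] matrix_vector_mult_diff_distrib)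
  also have "\<dots> \<le> k * norm (?b - ?L)"
    using component_le_norm_cart up order_trans by blast
  finally show ?thesis .
qed

lemma al_weight_ge_if_lsq_near:
  assumes lam: "\<And>n j. 0 \<le> lam n j"
    and t: "0 < t" and near: "norm (lsq X n y - axis j t) \<le> t / 2"
  shows "2 * lam n j / (3 * t) \<le> \<bar>al_weights X lam n y $ j\<bar>"
proof -
  let ?L = "lsq X n y"
  have "\<bar>?L $ j - t\<bar> \<le> t / 2"
    using component_le_norm_cart[of "?L - axis j t" j] near by simp
  then have L_pos: "t / 2 \<le> ?L $ j" and L_le: "?L $ j \<le> 3 * t / 2"
    by linarith+
  have "2 * lam n j / (3 * t) = lam n j / (3 * t / 2)"
    by simp
  also have "\<dots> \<le> lam n j / ?L $ j"
    using L_pos L_le t lam[of n j] by (intro divide_left_mono) auto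
  also have "\<dots> = \<bar>al_weights X lam n y $ j\<bar>"
    using L_pos t lam[of n j] by (simp add: al_weights_def)
  finally show ?thesis .
qed

lemma alasso_component_eq_0:
  fixes X :: "nat \<Rightarrow> nat \<Rightarrow> 'p::finite \<Rightarrow> real"
  assumes lam: "\<And>n j. 0 \<le> lam n j"
    and pd: "\<And>v. a * (norm v)\<^sup>2 \<le> v \<bullet> (XtX X n *v v)" and a: "0 < a"
    and up: "\<And>v. norm (XtX X n *v v) \<le> k * norm v"
    and t: "0 < t" and near: "norm (lsq X n y - axis j t) \<le> t / 2"
    and lam_max: "\<And>i. lam n i \<le> lam n j"
    and lam_big: "9 * t\<^sup>2 * real CARD('p) * k\<^sup>2 / (2 * a) < lam n j"
  shows "alasso X lam n y $ j = 0"
proof (rule ccontr)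
  let ?b = "alasso X lam n y" and ?L = "lsq X n y" and ?w = "al_weights X lam n y"
  assume nz: "?b $ j \<noteq> 0"
  have "0 \<le> 9 * t\<^sup>2 * real CARD('p) * k\<^sup>2 / (2 * a)"
    using a by simp
  then have lam_pos: "0 < lam n j"
    using lam_big by linarith
  have "2 * lam n j / (3 * t) \<le> \<bar>?w $ j\<bar>"
    by (rule al_weight_ge_if_lsq_near[OF lam t near])
  also have "\<dots> \<le> k * norm (?b - ?L)"
    by (rule al_weight_le_if_alasso_nonzero[OF lam pd a up nz])
  finally have weight_le: "2 * lam n j / (3 * t) \<le> k * norm (?b - ?L)" .
  have "a * (norm (?b - ?L))\<^sup>2 \<le> 2 * (\<Sum>i\<in>UNIV. lam n i)"
    by (rule alasso_lsq_dist_sq_le[OF lam pd a])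
  also have "\<dots> \<le> 2 * (\<Sum>i\<in>(UNIV::'p set). lam n j)"
    by (intro mult_left_mono sum_mono lam_max) auto
  finally have dist_le: "a * (norm (?b - ?L))\<^sup>2 \<le> 2 * real CARD('p) * lam n j"
    by simp
  have "a * (2 * lam n j / (3 * t))\<^sup>2 \<le> a * (k * norm (?b - ?L))\<^sup>2"
    using weight_le lam_pos t a by (intro mult_left_mono power_mono) auto
  also have "\<dots> = k\<^sup>2 * (a * (norm (?b - ?L))\<^sup>2)"
    by (simp add: power_mult_distrib)
  also have "\<dots> \<le> k\<^sup>2 * (2 * real CARD('p) * lam n j)"
    using dist_le by (intro mult_left_mono) auto
  finally have "lam n j * (2 * a * lam n j) \<le> lam n j * (9 * t\<^sup>2 * real CARD('p) * k\<^sup>2)"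
    using t by (simp add: field_simps power2_eq_square)
  then have "2 * a * lam n j \<le> 9 * t\<^sup>2 * real CARD('p) * k\<^sup>2"
    using lam_pos by simp
  then show False
    using lam_big a by (simp add: field_simps)
qed

lemma lam_star_ge: "lam n j \<le> lam_star lam n"
  unfolding lam_star_def by (rule Max_ge) auto

lemma lam_star_attained: "\<exists>j. lam n j = lam_star lam n"
proof -
  have "lam_star lam n \<in> range (lam n)"
    unfolding lam_star_def by (rule Max_in) auto
  then show ?thesis
    by auto
qed

lemma sum_le_card_lam_star: "(\<Sum>j\<in>UNIV. lam n j) \<le> real CARD('p) * lam_star lam n"
  for lam :: "nat \<Rightarrow> 'p::finite \<Rightarrow> real"
proof -
  have "(\<Sum>j\<in>UNIV. lam n j) \<le> (\<Sum>j\<in>(UNIV::'p set). lam_star lam n)"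
    by (intro sum_mono lam_star_ge)
  then show ?thesis
    by simp
qed

section \<open>Second moments of the errors\<close>

lemma borel_measurable_vec_lambda:
  fixes f :: "'a \<Rightarrow> 'n::finite \<Rightarrow> real"
  assumes "\<And>j. (\<lambda>x. f x j) \<in> borel_measurable M"
  shows "(\<lambda>x. \<chi> j. f x j) \<in> borel_measurable M"
proof (subst borel_measurable_euclidean_space, intro ballI)
  fix i :: "real^'n"
  assume "i \<in> Basis"
  then obtain j where "i = axis j 1"
    using axis_inverse by blast
  then show "(\<lambda>x. (\<chi> j. f x j) \<bullet> i) \<in> borel_measurable M"
    using assms[of j] by (simp add: inner_axis)
qed

lemma borel_measurable_vec_nth:
  fixes f :: "'a \<Rightarrow> real^'n::finite"
  assumes "f \<in> borel_measurable M"
  shows "(\<lambda>x. f x $ j) \<in> borel_measurable M"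
  unfolding cart_eq_inner_axis using assms by measurable

locale centred_law =
  fixes F :: "real measure"
  assumes prob_space_F: "prob_space F"
    and sets_F: "sets F = sets borel"
    and integrable_F: "integrable F (\<lambda>x. x)"
    and mean_F: "(\<integral>x. x \<partial>F) = 0"
    and integrable_sq_F: "integrable F (\<lambda>x. x\<^sup>2)"
begin

lemma prob_space_errs: "prob_space (errs F n)"
  unfolding errs_def by (rule prob_space_PiM) (rule prob_space_F)

lemma errs_component_measurable: "i < n \<Longrightarrow> (\<lambda>x. x i) \<in> borel_measurable (errs F n)"
  using measurable_component_singleton[of i "{..<n}" "\<lambda>_. F"]
  by (simp add: errs_def measurable_cong_sets[OF refl sets_F])

lemma integral_errs_mult_components:
  assumes "i < n" "k < n"
  shows "integrable (errs F n) (\<lambda>x. x i * x k)"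
    and "(\<integral>x. x i * x k \<partial>errs F n) = (if i = k then (\<integral>x. x\<^sup>2 \<partial>F) else 0)"
proof -
  interpret product_prob_space "\<lambda>_::nat. F" "{..<n}"
    by (intro product_prob_space.intro product_sigma_finite.intro product_prob_space_axioms.intro
        prob_space_imp_sigma_finite prob_space_F)
  interpret F: prob_space F
    by (rule prob_space_F)
  define f where "f l = (if l \<notin> {i, k} then (\<lambda>x. 1) else if i = k then (\<lambda>x. x\<^sup>2) else (\<lambda>x::real. x))"
    for l
  have integrable_f: "integrable F (f l)" for l
  proof -
    have "f l = (\<lambda>x. x\<^sup>2) \<or> f l = (\<lambda>x. x) \<or> f l = (\<lambda>x. 1)"
      by (cases "i = k"; cases "l = i"; cases "l = k") (auto simp: f_def)
    then show ?thesis
      using integrable_F integrable_sq_F by auto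
  qed
  have restrict: "(\<Prod>l<n. g l) = (\<Prod>l\<in>{i, k}. g l)" if "\<And>l. l \<notin> {i, k} \<Longrightarrow> g l = 1"
    for g :: "nat \<Rightarrow> real"
    using assms that by (intro prod.mono_neutral_right) auto
  have prod_f: "(\<Prod>l<n. f l (x l)) = x i * x k" for x :: "nat \<Rightarrow> real"
  proof -
    have "(\<Prod>l<n. f l (x l)) = (\<Prod>l\<in>{i, k}. f l (x l))"
      by (rule restrict) (simp add: f_def)
    then show ?thesis
      by (cases "i = k") (simp_all add: f_def power2_eq_square)
  qed
  have "integrable (errs F n) (\<lambda>x. \<Prod>l<n. f l (x l))"
    unfolding errs_def by (rule product_integrable_prod) (auto intro: integrable_f)
  then show "integrable (errs F n) (\<lambda>x. x i * x k)"
    by (simp add: prod_f)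
  have "(\<integral>x. (\<Prod>l<n. f l (x l)) \<partial>errs F n) = (\<Prod>l<n. integral\<^sup>L F (f l))"
    unfolding errs_def by (rule product_integral_prod) (auto intro: integrable_f)
  also have "\<dots> = (\<Prod>l\<in>{i, k}. integral\<^sup>L F (f l))"
    by (rule restrict) (simp add: f_def prob_space.prob_space[OF prob_space_F])
  also have "\<dots> = (if i = k then (\<integral>x. x\<^sup>2 \<partial>F) else 0)"
    using mean_F by (simp add: f_def)
  finally show "(\<integral>x. x i * x k \<partial>errs F n) = (if i = k then (\<integral>x. x\<^sup>2 \<partial>F) else 0)"
    by (simp add: prod_f)
qed

lemma integral_errs_linear_sq:
  shows "integrable (errs F n) (\<lambda>x. (\<Sum>i<n. a i * x i)\<^sup>2)"
    and "(\<integral>x. (\<Sum>i<n. a i * x i)\<^sup>2 \<partial>errs F n) = (\<integral>x. x\<^sup>2 \<partial>F) * (\<Sum>i<n. (a i)\<^sup>2)"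
proof -
  have expand: "(\<Sum>i<n. a i * x i)\<^sup>2 = (\<Sum>i<n. \<Sum>k<n. a i * a k * (x i * x k))" for x :: "nat \<Rightarrow> real"
    by (simp add: power2_eq_square sum_product algebra_simps)
  have integrable: "integrable (errs F n) (\<lambda>x. a i * a k * (x i * x k))" if "i < n" "k < n" for i k
    using integral_errs_mult_components(1)[OF that] by simp
  then show "integrable (errs F n) (\<lambda>x. (\<Sum>i<n. a i * x i)\<^sup>2)"
    unfolding expand by (intro Bochner_Integration.integrable_sum) auto
  have "(\<integral>x. (\<Sum>i<n. a i * x i)\<^sup>2 \<partial>errs F n) = (\<Sum>i<n. \<Sum>k<n. \<integral>x. a i * a k * (x i * x k) \<partial>errs F n)"
    unfolding expand using integrable
    by (subst Bochner_Integration.integral_sum, (auto intro!: Bochner_Integration.integrable_sum)[1],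
        intro sum.cong refl Bochner_Integration.integral_sum) auto
  also have "\<dots> = (\<Sum>i<n. \<Sum>k<n. a i * a k * (if i = k then (\<integral>x. x\<^sup>2 \<partial>F) else 0))"
    using integral_errs_mult_components(2) by (intro sum.cong refl) simp
  also have "\<dots> = (\<integral>x. x\<^sup>2 \<partial>F) * (\<Sum>i<n. (a i)\<^sup>2)"
    by (simp add: sum_distrib_left power2_eq_square algebra_simps if_distrib cong: if_cong)
  finally show "(\<integral>x. (\<Sum>i<n. a i * x i)\<^sup>2 \<partial>errs F n) = (\<integral>x. x\<^sup>2 \<partial>F) * (\<Sum>i<n. (a i)\<^sup>2)" .
qed

lemma integral_norm_Xty_sq:
  shows "integrable (errs F n) (\<lambda>eps. (norm (Xty X n eps))\<^sup>2)"
    and "(\<integral>eps. (norm (Xty X n eps))\<^sup>2 \<partial>errs F n) = (\<integral>x. x\<^sup>2 \<partial>F) * (\<Sum>j\<in>UNIV. XtX X n $ j $ j)"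
proof -
  have norm_sq: "(norm (Xty X n eps))\<^sup>2 = (\<Sum>j\<in>UNIV. (\<Sum>i<n. X n i j * eps i)\<^sup>2)" for eps
    unfolding power2_norm_eq_inner by (simp add: inner_vec_def Xty_def power2_eq_square)
  show "integrable (errs F n) (\<lambda>eps. (norm (Xty X n eps))\<^sup>2)"
    unfolding norm_sq using integral_errs_linear_sq(1) by (intro Bochner_Integration.integrable_sum)
  show "(\<integral>eps. (norm (Xty X n eps))\<^sup>2 \<partial>errs F n) = (\<integral>x. x\<^sup>2 \<partial>F) * (\<Sum>j\<in>UNIV. XtX X n $ j $ j)"
    unfolding norm_sq using integral_errs_linear_sq
    by (simp add: Bochner_Integration.integral_sum XtX_def sum_distrib_left flip: power2_eq_square)
qed

lemma Xty_measurable: "(\<lambda>eps. Xty X n eps) \<in> borel_measurable (errs F n)"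
  unfolding Xty_def
proof (intro borel_measurable_vec_lambda borel_measurable_sum borel_measurable_times borel_measurable_const)
  show "(\<lambda>eps. eps i) \<in> borel_measurable (errs F n)" if "i \<in> {..<n}" for i
    using that by (simp add: errs_component_measurable)
qed

lemma measure_norm_Xty_ge_le:
  assumes r: "0 < r"
  shows "measure (errs F n) {eps \<in> space (errs F n). r \<le> norm (Xty X n eps)}
           \<le> (\<integral>x. x\<^sup>2 \<partial>F) * (\<Sum>j\<in>UNIV. XtX X n $ j $ j) / r\<^sup>2"
proof -
  have "{eps \<in> space (errs F n). r \<le> norm (Xty X n eps)}
      = {eps \<in> space (errs F n). r\<^sup>2 \<le> (norm (Xty X n eps))\<^sup>2}"
    using r abs_le_square_iff[of r] by auto
  also have "measure (errs F n) \<dots> \<le> (\<integral>eps. (norm (Xty X n eps))\<^sup>2 \<partial>errs F n) / r\<^sup>2"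
    using r by (intro integral_Markov_inequality_measure[where A = "space (errs F n)"]
        integral_norm_Xty_sq) auto
  finally show ?thesis
    by (simp add: integral_norm_Xty_sq)
qed

lemma Xty_resp_measurable: "(\<lambda>eps. Xty X n (resp X n \<beta> eps)) \<in> borel_measurable (errs F n)"
  unfolding Xty_resp by (intro borel_measurable_add borel_measurable_const Xty_measurable)

lemma lsq_resp_measurable: "(\<lambda>eps. lsq X n (resp X n \<beta> eps)) \<in> borel_measurable (errs F n)"
  unfolding lsq_def
  by (rule borel_measurable_continuous_on[OF matrix_vector_mult_linear_continuous_on Xty_resp_measurable])

lemma alasso_resp_measurable:
  assumes lam: "\<And>n j. 0 \<le> lam n j"
    and pd: "\<And>v. a * (norm v)\<^sup>2 \<le> v \<bullet> (XtX X n *v v)" and a: "0 < a"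
  shows "(\<lambda>eps. alasso X lam n (resp X n \<beta> eps)) \<in> borel_measurable (errs F n)"
proof -
  have "(\<lambda>eps. al_weights X lam n (resp X n \<beta> eps)) \<in> borel_measurable (errs F n)"
    unfolding al_weights_def
    by (intro borel_measurable_vec_lambda borel_measurable_divide borel_measurable_abs
        borel_measurable_vec_nth lsq_resp_measurable) simp
  with Xty_resp_measurable show ?thesis
    unfolding alasso_eq_wlasso[OF lam]
    by (rule borel_measurable_continuous_Pair[OF _ _ continuous_on_wlasso[OF pd a]])
qed

lemma Pb_nonneg: "0 \<le> Pb F X n \<beta> E"
  by (simp add: Pb_def)

lemma bdd_above_Pb: "bdd_above (range (\<lambda>\<beta>. Pb F X n \<beta> (E \<beta>)))"
  using prob_space.prob_le_1[OF prob_space_errs] by (intro bdd_aboveI[of _ 1]) (auto simp: Pb_def)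

lemma consistent_if_uniformly_consistent:
  assumes "\<forall>\<epsilon>>0. (\<lambda>n. SUP \<beta>. Pb F X n \<beta> (\<lambda>y. norm (alasso X lam n y - \<beta>) > \<epsilon>)) \<longlonglongrightarrow> 0"
  shows "\<forall>\<beta>. \<forall>\<epsilon>>0. (\<lambda>n. Pb F X n \<beta> (\<lambda>y. norm (alasso X lam n y - \<beta>) > \<epsilon>)) \<longlonglongrightarrow> 0"
proof (intro allI impI)
  fix \<beta> and \<epsilon> :: real
  assume "0 < \<epsilon>"
  with assms have "(\<lambda>n. SUP \<beta>. Pb F X n \<beta> (\<lambda>y. norm (alasso X lam n y - \<beta>) > \<epsilon>)) \<longlonglongrightarrow> 0"
    by blast
  then show "(\<lambda>n. Pb F X n \<beta> (\<lambda>y. norm (alasso X lam n y - \<beta>) > \<epsilon>)) \<longlonglongrightarrow> 0"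
    by (rule tendsto_0_if_SUP_tendsto_0[OF _ Pb_nonneg bdd_above_Pb])
qed

end

section \<open>Asymptotics\<close>

locale adaptive_lasso_asymptotics = centred_law F for F :: "real measure" +
  fixes X :: "nat \<Rightarrow> nat \<Rightarrow> 'p::finite \<Rightarrow> real" and lam :: "nat \<Rightarrow> 'p \<Rightarrow> real"
    and c K :: real and N :: nat
  assumes lam_nonneg: "\<And>n j. 0 \<le> lam n j"
    and c_pos: "0 < c" and K_pos: "0 < K" and N_pos: "0 < N"
    and XtX_lower: "\<And>n v. N \<le> n \<Longrightarrow> c * real n * (norm v)\<^sup>2 \<le> v \<bullet> (XtX X n *v v)"
    and XtX_upper: "\<And>n v. N \<le> n \<Longrightarrow> norm (XtX X n *v v) \<le> K * real n * norm v"
begin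

definition chebyshev_bound :: "real \<Rightarrow> nat \<Rightarrow> real" where
  "chebyshev_bound \<eta> n = (\<integral>x. x\<^sup>2 \<partial>F) * real CARD('p) * K / (c\<^sup>2 * \<eta>\<^sup>2 * real n)"

lemma chebyshev_bound_tendsto_0: "(\<lambda>n. chebyshev_bound \<eta> n) \<longlonglongrightarrow> 0"
proof -
  define a where "a = (\<integral>x. x\<^sup>2 \<partial>F) * real CARD('p) * K / (c\<^sup>2 * \<eta>\<^sup>2)"
  have "(\<lambda>n. a * inverse (real n)) \<longlonglongrightarrow> a * 0"
    by (intro tendsto_mult tendsto_const lim_inverse_n)
  moreover have "chebyshev_bound \<eta> n = a * inverse (real n)" for n
    by (simp add: chebyshev_bound_def a_def divide_inverse inverse_mult_distrib mult_ac)
  ultimately show ?thesis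
    by simp
qed

lemma Pb_lsq_far_le:
  assumes n: "N \<le> n" and \<eta>: "0 < \<eta>"
    and far: "\<And>eps. E (resp X n \<beta> eps) \<Longrightarrow> \<eta> \<le> norm (lsq X n (resp X n \<beta> eps) - \<beta>)"
  shows "Pb F X n \<beta> E \<le> chebyshev_bound \<eta> n"
proof -
  interpret P: prob_space "errs F n"
    by (rule prob_space_errs)
  have cn: "0 < c * real n"
    using c_pos N_pos n by simp
  have [measurable]: "(\<lambda>eps. Xty X n eps) \<in> borel_measurable (errs F n)"
    by (rule Xty_measurable)
  let ?S = "{eps \<in> space (errs F n). c * real n * \<eta> \<le> norm (Xty X n eps)}"
  have "{eps \<in> space (errs F n). E (resp X n \<beta> eps)} \<subseteq> ?S"
  proof safe
    fix eps
    assume "E (resp X n \<beta> eps)"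
    then have "c * real n * \<eta> \<le> c * real n * norm (lsq X n (resp X n \<beta> eps) - \<beta>)"
      using far cn by (intro mult_left_mono) auto
    also have "\<dots> \<le> norm (Xty X n eps)"
      by (rule lsq_resp_error_le[OF XtX_lower[OF n] cn])
    finally show "c * real n * \<eta> \<le> norm (Xty X n eps)" .
  qed
  moreover have "?S \<in> sets (errs F n)"
    by measurable
  ultimately have "Pb F X n \<beta> E \<le> measure (errs F n) ?S"
    unfolding Pb_def by (rule P.finite_measure_mono)
  also have "\<dots> \<le> (\<integral>x. x\<^sup>2 \<partial>F) * (\<Sum>j\<in>UNIV. XtX X n $ j $ j) / (c * real n * \<eta>)\<^sup>2"
    using cn \<eta> by (intro measure_norm_Xty_ge_le) simp
  also have "\<dots> \<le> (\<integral>x. x\<^sup>2 \<partial>F) * (real CARD('p) * (K * real n)) / (c * real n * \<eta>)\<^sup>2"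
    using XtX_upper[OF n] by (intro divide_right_mono mult_left_mono diagonal_sum_le) auto
  also have "\<dots> = chebyshev_bound \<eta> n"
    using cn \<eta> by (simp add: chebyshev_bound_def field_simps power2_eq_square)
  finally show ?thesis .
qed

lemma Pb_alasso_far_le:
  assumes n: "N \<le> n" and \<epsilon>: "0 < \<epsilon>"
    and lam_small: "2 * real CARD('p) * lam_star lam n / (c * real n) \<le> (\<epsilon> / 2)\<^sup>2"
    and far: "\<And>y. E y \<Longrightarrow> \<epsilon> < norm (alasso X lam n y - \<beta>)"
  shows "Pb F X n \<beta> E \<le> chebyshev_bound (\<epsilon> / 2) n"
proof (rule Pb_lsq_far_le[OF n])
  fix eps
  assume "E (resp X n \<beta> eps)"
  let ?y = "resp X n \<beta> eps"
  let ?b = "alasso X lam n ?y" and ?L = "lsq X n ?y"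
  have cn: "0 < c * real n"
    using c_pos N_pos n by simp
  have "c * real n * (norm (?b - ?L))\<^sup>2 \<le> 2 * (\<Sum>j\<in>UNIV. lam n j)"
    by (rule alasso_lsq_dist_sq_le[OF lam_nonneg XtX_lower[OF n] cn])
  also have "\<dots> \<le> 2 * real CARD('p) * lam_star lam n"
    using sum_le_card_lam_star by simp
  finally have "(norm (?b - ?L))\<^sup>2 * (c * real n) \<le> 2 * real CARD('p) * lam_star lam n"
    by (simp add: ac_simps)
  then have "(norm (?b - ?L))\<^sup>2 \<le> 2 * real CARD('p) * lam_star lam n / (c * real n)"
    by (simp add: pos_le_divide_eq[OF cn])
  also have "\<dots> \<le> (\<epsilon> / 2)\<^sup>2"
    by (rule lam_small)
  finally have "(norm (?b - ?L))\<^sup>2 \<le> (\<epsilon> / 2)\<^sup>2" .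
  then have "norm (?b - ?L) \<le> \<epsilon> / 2"
    by (rule power2_le_imp_le) (use \<epsilon> in simp)
  moreover have "\<epsilon> < norm (?b - \<beta>)"
    by (rule far) fact
  moreover have "norm (?b - \<beta>) \<le> norm (?b - ?L) + norm (?L - \<beta>)"
    using norm_triangle_ineq[of "?b - ?L" "?L - \<beta>"] by simp
  ultimately show "\<epsilon> / 2 \<le> norm (?L - \<beta>)"
    by linarith
qed (use \<epsilon> in simp)

lemma Pb_ge_if_lsq_near:
  assumes n: "N \<le> n" and \<eta>: "0 < \<eta>"
    and E_sets: "{eps \<in> space (errs F n). E (resp X n \<beta> eps)} \<in> sets (errs F n)"
    and near: "\<And>eps. norm (lsq X n (resp X n \<beta> eps) - \<beta>) < \<eta> \<Longrightarrow> E (resp X n \<beta> eps)"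
  shows "1 - chebyshev_bound \<eta> n \<le> Pb F X n \<beta> E"
proof -
  interpret P: prob_space "errs F n"
    by (rule prob_space_errs)
  have "Pb F X n \<beta> (\<lambda>y. \<not> E y) \<le> chebyshev_bound \<eta> n"
    by (rule Pb_lsq_far_le[OF n \<eta>]) (use near not_less in blast)
  moreover have "{eps \<in> space (errs F n). \<not> E (resp X n \<beta> eps)}
      = space (errs F n) - {eps \<in> space (errs F n). E (resp X n \<beta> eps)}"
    by blast
  then have "Pb F X n \<beta> (\<lambda>y. \<not> E y) = 1 - Pb F X n \<beta> E"
    unfolding Pb_def using P.prob_compl[OF E_sets] by simp
  ultimately show ?thesis
    by simp
qed

lemma Pb_alasso_zero_ge:
  assumes n: "N \<le> n" and t: "0 < t"
    and lam_max: "lam n j = lam_star lam n"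
    and lam_big: "9 * t\<^sup>2 * real CARD('p) * K\<^sup>2 * real n / (2 * c) < lam n j"
  shows "1 - chebyshev_bound (t / 2) n \<le> Pb F X n (axis j t) (\<lambda>y. alasso X lam n y $ j = 0)"
    and "1 - chebyshev_bound (t / 2) n
           \<le> Pb F X n (axis j t) (\<lambda>y. t / 2 < norm (alasso X lam n y - axis j t))"
proof -
  let ?\<beta> = "axis j t"
  have cn: "0 < c * real n"
    using c_pos N_pos n by simp
  have [measurable]: "(\<lambda>e. alasso X lam n (resp X n ?\<beta> e)) \<in> borel_measurable (errs F n)"
    by (rule alasso_resp_measurable[OF lam_nonneg XtX_lower[OF n] cn])
  have [measurable]: "(\<lambda>e. alasso X lam n (resp X n ?\<beta> e) $ j) \<in> borel_measurable (errs F n)"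
    by (rule borel_measurable_vec_nth) measurable
  have zero: "alasso X lam n (resp X n ?\<beta> e) $ j = 0"
    if "norm (lsq X n (resp X n ?\<beta> e) - ?\<beta>) < t / 2" for e
  proof (rule alasso_component_eq_0[OF lam_nonneg XtX_lower[OF n] cn XtX_upper[OF n] t])
    show "norm (lsq X n (resp X n ?\<beta> e) - ?\<beta>) \<le> t / 2"
      using that by simp
    show "lam n i \<le> lam n j" for i
      unfolding lam_max by (rule lam_star_ge)
    show "9 * t\<^sup>2 * real CARD('p) * (K * real n)\<^sup>2 / (2 * (c * real n)) < lam n j"
      using lam_big N_pos n by (simp add: power_mult_distrib power2_eq_square)
  qed
  have far: "t / 2 < norm (b - ?\<beta>)" if "b $ j = 0" for b :: "real^'p"
    using component_le_norm_cart[of "b - ?\<beta>" j] that t by simp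
  have zero_sets: "{e \<in> space (errs F n). alasso X lam n (resp X n ?\<beta> e) $ j = 0} \<in> sets (errs F n)"
    and far_sets: "{e \<in> space (errs F n). t / 2 < norm (alasso X lam n (resp X n ?\<beta> e) - ?\<beta>)}
                     \<in> sets (errs F n)"
    by measurable
  show "1 - chebyshev_bound (t / 2) n \<le> Pb F X n ?\<beta> (\<lambda>y. alasso X lam n y $ j = 0)"
    by (rule Pb_ge_if_lsq_near[OF n _ zero_sets]) (use t zero in auto)
  show "1 - chebyshev_bound (t / 2) n \<le> Pb F X n ?\<beta> (\<lambda>y. t / 2 < norm (alasso X lam n y - ?\<beta>))"
    by (rule Pb_ge_if_lsq_near[OF n _ far_sets]) (use t zero far in auto)
qed

lemma eventually_Pb_alasso_far_le:
  assumes lim: "(\<lambda>n. lam_star lam n / real n) \<longlonglongrightarrow> 0" and \<epsilon>: "0 < \<epsilon>"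
  shows "\<forall>\<^sub>F n in sequentially. \<forall>\<beta> E. (\<forall>y. E y \<longrightarrow> \<epsilon> < norm (alasso X lam n y - \<beta>))
           \<longrightarrow> Pb F X n \<beta> E \<le> chebyshev_bound (\<epsilon> / 2) n"
proof -
  have "(\<lambda>n. 2 * real CARD('p) / c * (lam_star lam n / real n)) \<longlonglongrightarrow> 2 * real CARD('p) / c * 0"
    by (intro tendsto_mult tendsto_const lim)
  then have "\<forall>\<^sub>F n in sequentially. 2 * real CARD('p) / c * (lam_star lam n / real n) < (\<epsilon> / 2)\<^sup>2"
    using \<epsilon> by (intro order_tendstoD) auto
  moreover have "\<forall>\<^sub>F n in sequentially. N \<le> n"
    by (rule eventually_ge_at_top)
  ultimately show ?thesis
  proof eventually_elim
    case (elim n)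
    then have small: "2 * real CARD('p) * lam_star lam n / (c * real n) \<le> (\<epsilon> / 2)\<^sup>2"
      by simp
    show ?case
    proof (intro allI impI)
      fix \<beta> E
      assume "\<forall>y. E y \<longrightarrow> \<epsilon> < norm (alasso X lam n y - \<beta>)"
      then show "Pb F X n \<beta> E \<le> chebyshev_bound (\<epsilon> / 2) n"
        by (intro Pb_alasso_far_le[OF elim(2) \<epsilon> small]) blast
    qed
  qed
qed

lemma uniformly_consistent_if_lam_star_small:
  assumes lim: "(\<lambda>n. lam_star lam n / real n) \<longlonglongrightarrow> 0"
  shows "\<forall>\<epsilon>>0. (\<lambda>n. SUP \<beta>. Pb F X n \<beta> (\<lambda>y. norm (alasso X lam n y - \<beta>) > \<epsilon>)) \<longlonglongrightarrow> 0"
proof (intro allI impI)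
  fix \<epsilon> :: real
  assume \<epsilon>: "0 < \<epsilon>"
  show "(\<lambda>n. SUP \<beta>. Pb F X n \<beta> (\<lambda>y. norm (alasso X lam n y - \<beta>) > \<epsilon>)) \<longlonglongrightarrow> 0"
  proof (rule tendsto_sandwich[OF _ _ tendsto_const chebyshev_bound_tendsto_0])
    show "\<forall>\<^sub>F n in sequentially. 0 \<le> (SUP \<beta>. Pb F X n \<beta> (\<lambda>y. \<epsilon> < norm (alasso X lam n y - \<beta>)))"
      by (intro always_eventually allI order_trans[OF Pb_nonneg cSUP_upper[OF UNIV_I bdd_above_Pb]])
    show "\<forall>\<^sub>F n in sequentially. (SUP \<beta>. Pb F X n \<beta> (\<lambda>y. \<epsilon> < norm (alasso X lam n y - \<beta>)))
            \<le> chebyshev_bound (\<epsilon> / 2) n"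
      using eventually_Pb_alasso_far_le[OF lim \<epsilon>] by eventually_elim (auto intro: cSUP_least)
  qed
qed

lemma active_not_zeroed_if_lam_star_small:
  assumes lim: "(\<lambda>n. lam_star lam n / real n) \<longlonglongrightarrow> 0"
  shows "\<forall>\<beta> j. \<beta> $ j \<noteq> 0 \<longrightarrow> (\<lambda>n. Pb F X n \<beta> (\<lambda>y. alasso X lam n y $ j = 0)) \<longlonglongrightarrow> 0"
proof (intro allI impI)
  fix \<beta> :: "real^'p" and j
  assume active: "\<beta> $ j \<noteq> 0"
  have far: "\<bar>\<beta> $ j\<bar> / 2 < norm (b - \<beta>)" if "b $ j = 0" for b :: "real^'p"
    using component_le_norm_cart[of "b - \<beta>" j] that active by simp
  show "(\<lambda>n. Pb F X n \<beta> (\<lambda>y. alasso X lam n y $ j = 0)) \<longlonglongrightarrow> 0"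
  proof (rule tendsto_sandwich[OF _ _ tendsto_const chebyshev_bound_tendsto_0])
    show "\<forall>\<^sub>F n in sequentially. 0 \<le> Pb F X n \<beta> (\<lambda>y. alasso X lam n y $ j = 0)"
      by (simp add: Pb_nonneg)
    show "\<forall>\<^sub>F n in sequentially.
            Pb F X n \<beta> (\<lambda>y. alasso X lam n y $ j = 0) \<le> chebyshev_bound (\<bar>\<beta> $ j\<bar> / 2 / 2) n"
      using eventually_Pb_alasso_far_le[OF lim, of "\<bar>\<beta> $ j\<bar> / 2"] active far
      by (simp add: eventually_mono)
  qed
qed

lemma frequently_dominant_penalty:
  assumes not_lim: "\<not> (\<lambda>n. lam_star lam n / real n) \<longlonglongrightarrow> 0"
  obtains j r where "0 < r"
    "\<exists>\<^sub>F n in sequentially. N \<le> n \<and> lam n j = lam_star lam n \<and> r * real n \<le> lam n j"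
proof -
  have "0 \<le> lam_star lam n / real n" for n
    using lam_nonneg[of n undefined] lam_star_ge[of lam n undefined] by simp
  then obtain r where r: "0 < r" and "\<exists>\<^sub>F n in sequentially. r \<le> lam_star lam n / real n"
    by (rule frequently_ge_if_not_tendsto_0[OF _ not_lim])
  from this(2) have "\<exists>\<^sub>F n in sequentially. \<exists>j. lam n j = lam_star lam n \<and> r \<le> lam_star lam n / real n"
    by (rule frequently_elim1) (use lam_star_attained in blast)
  then obtain j where "\<exists>\<^sub>F n in sequentially. lam n j = lam_star lam n \<and> r \<le> lam_star lam n / real n"
    by (rule frequently_ex_finite)
  then have "\<exists>\<^sub>F n in sequentially. N \<le> n \<and> lam n j = lam_star lam n \<and> r * real n \<le> lam n j"
  proof (rule frequently_rev_mp)
    show "\<forall>\<^sub>F n in sequentially. lam n j = lam_star lam n \<and> r \<le> lam_star lam n / real n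
            \<longrightarrow> N \<le> n \<and> lam n j = lam_star lam n \<and> r * real n \<le> lam n j"
      using eventually_ge_at_top[of N]
    proof eventually_elim
      case (elim n)
      then show ?case
        using N_pos by (auto simp: pos_le_divide_eq)
    qed
  qed
  with r that show ?thesis
    by blast
qed

text \<open>A dominant penalty of order \<open>n\<close> makes the estimator drop the active coordinate \<open>j\<close> of
  \<open>\<beta> = t e\<^sub>j\<close> whenever \<open>lsq\<close> is within \<open>t/2\<close> of \<open>\<beta>\<close>, an event of probability close to \<open>1\<close>.\<close>

lemma zeroes_active_if_not_lam_star_small:
  assumes not_lim: "\<not> (\<lambda>n. lam_star lam n / real n) \<longlonglongrightarrow> 0"
  obtains j t where "0 < t"
    "\<not> (\<lambda>n. Pb F X n (axis j t) (\<lambda>y. alasso X lam n y $ j = 0)) \<longlonglongrightarrow> 0"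
    "\<not> (\<lambda>n. Pb F X n (axis j t) (\<lambda>y. t / 2 < norm (alasso X lam n y - axis j t))) \<longlonglongrightarrow> 0"
proof -
  obtain j r where r: "0 < r"
    and dominant: "\<exists>\<^sub>F n in sequentially. N \<le> n \<and> lam n j = lam_star lam n \<and> r * real n \<le> lam n j"
    by (rule frequently_dominant_penalty[OF not_lim])
  define t where "t = sqrt (r * c / (9 * real CARD('p) * K\<^sup>2))"
  have t: "0 < t" "t\<^sup>2 * (9 * real CARD('p) * K\<^sup>2) = r * c"
    using r c_pos K_pos by (simp_all add: t_def)
  have "\<exists>\<^sub>F n in sequentially.
          1 - chebyshev_bound (t / 2) n \<le> Pb F X n (axis j t) (\<lambda>y. alasso X lam n y $ j = 0)
        \<and> 1 - chebyshev_bound (t / 2) n \<le> Pb F X n (axis j t) (\<lambda>y. t / 2 < norm (alasso X lam n y - axis j t))"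
    using dominant
  proof (rule frequently_elim1, elim conjE)
    fix n
    assume n: "N \<le> n" and lam_max: "lam n j = lam_star lam n" and ge: "r * real n \<le> lam n j"
    have "9 * t\<^sup>2 * real CARD('p) * K\<^sup>2 * real n / (2 * c)
        = t\<^sup>2 * (9 * real CARD('p) * K\<^sup>2) * real n / (2 * c)"
      by (simp add: ac_simps)
    also have "\<dots> = r * real n / 2"
      using c_pos by (simp add: t(2))
    also have "\<dots> < lam n j"
      using mult_pos_pos[OF r, of "real n"] N_pos n ge by simp
    finally show "1 - chebyshev_bound (t / 2) n \<le> Pb F X n (axis j t) (\<lambda>y. alasso X lam n y $ j = 0)
        \<and> 1 - chebyshev_bound (t / 2) n \<le> Pb F X n (axis j t) (\<lambda>y. t / 2 < norm (alasso X lam n y - axis j t))"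
      using Pb_alasso_zero_ge[OF n t(1) lam_max] by blast
  qed
  then have "\<exists>\<^sub>F n in sequentially.
               1 - chebyshev_bound (t / 2) n \<le> Pb F X n (axis j t) (\<lambda>y. alasso X lam n y $ j = 0)"
    and "\<exists>\<^sub>F n in sequentially.
           1 - chebyshev_bound (t / 2) n \<le> Pb F X n (axis j t) (\<lambda>y. t / 2 < norm (alasso X lam n y - axis j t))"
    by (auto elim: frequently_elim1)
  then show ?thesis
    by (intro that[OF t(1)] not_tendsto_0_if_frequently_ge_1_minus[OF chebyshev_bound_tendsto_0])
qed

lemma lam_star_small_if_consistent:
  assumes "\<forall>\<beta>. \<forall>\<epsilon>>0. (\<lambda>n. Pb F X n \<beta> (\<lambda>y. norm (alasso X lam n y - \<beta>) > \<epsilon>)) \<longlonglongrightarrow> 0"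
  shows "(\<lambda>n. lam_star lam n / real n) \<longlonglongrightarrow> 0"
proof (rule ccontr)
  assume "\<not> (\<lambda>n. lam_star lam n / real n) \<longlonglongrightarrow> 0"
  then obtain j t where "0 < t / 2"
    and "\<not> (\<lambda>n. Pb F X n (axis j t) (\<lambda>y. t / 2 < norm (alasso X lam n y - axis j t))) \<longlonglongrightarrow> 0"
    by (rule zeroes_active_if_not_lam_star_small) simp
  with assms show False
    by blast
qed

lemma lam_star_small_if_active_not_zeroed:
  assumes "\<forall>\<beta> j. \<beta> $ j \<noteq> 0 \<longrightarrow> (\<lambda>n. Pb F X n \<beta> (\<lambda>y. alasso X lam n y $ j = 0)) \<longlonglongrightarrow> 0"
  shows "(\<lambda>n. lam_star lam n / real n) \<longlonglongrightarrow> 0"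
proof (rule ccontr)
  assume "\<not> (\<lambda>n. lam_star lam n / real n) \<longlonglongrightarrow> 0"
  then obtain j t where "0 < t"
    and "\<not> (\<lambda>n. Pb F X n (axis j t) (\<lambda>y. alasso X lam n y $ j = 0)) \<longlonglongrightarrow> 0"
    by (rule zeroes_active_if_not_lam_star_small)
  moreover from \<open>0 < t\<close> have "axis j t $ j \<noteq> 0"
    by simp
  ultimately show False
    using assms by blast
qed

end

theorem theorem1:
  fixes F :: "real measure"
    and X :: "nat \<Rightarrow> nat \<Rightarrow> 'p::finite \<Rightarrow> real"
    and C :: "real^'p^'p"
    and lam :: "nat \<Rightarrow> 'p \<Rightarrow> real"
  assumes F_prob: "prob_space F"
    and F_borel: "sets F = sets borel"
    and F_mean: "integrable F (\<lambda>x. x)" "(\<integral>x. x \<partial>F) = 0"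
    and F_var: "integrable F (\<lambda>x. x\<^sup>2)" "(\<integral>x. x\<^sup>2 \<partial>F) > 0"
    and full_rank: "\<And>n v. n \<ge> CARD('p) \<Longrightarrow>
                       (\<forall>i<n. (\<Sum>j\<in>UNIV. X n i j * v $ j) = 0) \<Longrightarrow> v = 0"
    and C_lim: "(\<lambda>n. (1 / real n) *\<^sub>R XtX X n) \<longlonglongrightarrow> C"
    and C_pd: "\<And>v. v \<noteq> 0 \<Longrightarrow> v \<bullet> (C *v v) > 0"
    and lam_nonneg: "\<And>n j. lam n j \<ge> 0"
    and LS_nonzero: "\<And>n \<beta> j. n \<ge> CARD('p) \<Longrightarrow> Pb F X n \<beta> (\<lambda>y. lsq X n y $ j = 0) = 0"
  shows
   "((\<forall>\<beta>. \<forall>\<epsilon>>0. (\<lambda>n. Pb F X n \<beta> (\<lambda>y. norm (alasso X lam n y - \<beta>) > \<epsilon>)) \<longlonglongrightarrow> 0)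
      \<longleftrightarrow> (\<forall>\<epsilon>>0. (\<lambda>n. SUP \<beta>. Pb F X n \<beta> (\<lambda>y. norm (alasso X lam n y - \<beta>) > \<epsilon>)) \<longlonglongrightarrow> 0))
    \<and> ((\<forall>\<epsilon>>0. (\<lambda>n. SUP \<beta>. Pb F X n \<beta> (\<lambda>y. norm (alasso X lam n y - \<beta>) > \<epsilon>)) \<longlonglongrightarrow> 0)
      \<longleftrightarrow> (\<lambda>n. lam_star lam n / real n) \<longlonglongrightarrow> 0)
    \<and> ((\<lambda>n. lam_star lam n / real n) \<longlonglongrightarrow> 0
      \<longleftrightarrow> (\<forall>\<beta>. \<forall>j. \<beta> $ j \<noteq> 0 \<longrightarrow> (\<lambda>n. Pb F X n \<beta> (\<lambda>y. alasso X lam n y $ j = 0)) \<longlonglongrightarrow> 0))"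
proof -
  obtain c K N where bounds: "0 < c" "0 < K" "0 < N"
    "\<And>n v. N \<le> n \<Longrightarrow> c * real n * (norm v)\<^sup>2 \<le> v \<bullet> (XtX X n *v v)"
    "\<And>n v. N \<le> n \<Longrightarrow> norm (XtX X n *v v) \<le> K * real n * norm v"
    using eventually_scaled_gram_bounds[OF C_lim C_pd] by blast
  interpret adaptive_lasso_asymptotics F X lam c K N
    by (intro adaptive_lasso_asymptotics.intro centred_law.intro adaptive_lasso_asymptotics_axioms.intro)
      (fact F_prob F_borel F_mean F_var(1) lam_nonneg bounds)+
  show ?thesis
    using consistent_if_uniformly_consistent uniformly_consistent_if_lam_star_small
      lam_star_small_if_consistent active_not_zeroed_if_lam_star_small lam_star_small_if_active_not_zeroed
    by blast
qed

end
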